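(* Let $(p,q)$ be a coprime pair of positive integers with $1\le q<p$, let $(a,b)=(p-q,q)$, and let $n_L,n_R$, the integers $a_j$ ($-n_R\le j\le n_L$, $j\ne0$) and $c$ be constructed from $(a,b)$ as in the context. Then \[[\,|a_1|,\dots,|a_{n_L}|,|c|,|a_{-n_R}|,\dots,|a_{-1}|\,]=\frac{p^2}{pq-1}\quad\text{or}\quad[\,|a_{-1}|,\dots,|a_{-n_R}|,|c|,|a_{n_L}|,\dots,|a_1|\,]=\frac{p^2}{pq-1}.\] Equivalently, the linear plumbing of disk bundles over $S^2$ with Euler numbers $a_1,\dots,a_{n_L},c,a_{-n_R},\dots,a_{-1}$ (in this order along a chain) is diffeomorphic to $C_{p,q}$.
   Context: Continued fractions: $[x_1,\dots,x_n]=x_1-\cfrac{1}{x_2-\cfrac{1}{\ddots-\cfrac{1}{x_n}}}$. $C_{p,q}$ is the linear plumbing with weights $-c_0,\dots,-c_N$ where $p^2/(pq-1)=[c_0,\dots,c_N]$ with all $c_i\ge2$. Word: set $(a_0,b_0)=(a,b)$; if $a_i>b_i$ let $w_{i+1}=L$, $(a_{i+1},b_{i+1})=(a_i-b_i,b_i)$; if $a_i<b_i$ let $w_{i+1}=R$, $(a_{i+1},b_{i+1})=(a_i,b_i-a_i)$; stop at the first $N$ with $(a_N,b_N)=(1,1)$. Let $W_i=w_{N+1-i}$, and $n_L$, $n_R$ the numbers of $L$'s and $R$'s. Sequence: each $\{a^{(i)}_j\}$ is indexed by consecutive integers $m(i)\le j\le M(i)$. Start with $(a^{(0)}_{-1},a^{(0)}_0,a^{(0)}_1)=(-1,-1,-1)$.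 For $i=1,\dots,N$, always $a^{(i)}_0=-1$, and: if $W_i=R$, set $a^{(i)}_j=a^{(i-1)}_j$ for $1<j\le M(i-1)$, $a^{(i)}_1=a^{(i-1)}_1-1$, $a^{(i)}_{-1}=-2$, $a^{(i)}_j=a^{(i-1)}_{j+1}$ for $m(i-1)-1\le j<-1$; if $W_i=L$, set $a^{(i)}_j=a^{(i-1)}_j$ for $m(i-1)\le j<-1$, $a^{(i)}_{-1}=a^{(i-1)}_{-1}-1$, $a^{(i)}_1=-2$, $a^{(i)}_j=a^{(i-1)}_{j-1}$ for $1<j\le M(i-1)+1$. After $N$ steps the index range is $-(n_R+1)\le j\le n_L+1$; put $a_j=a^{(N)}_j$ for $-n_R\le j\le n_L$, $j\neq0$, and $c=a^{(N)}_{n_L+1}+a^{(N)}_{-(n_R+1)}-2$. *)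

theory Defs
  imports Complex_Main
begin

datatype letter = L | R

text \<open>Continued fraction [x1,...,xn] = x1 - 1/(x2 - 1/(... - 1/xn)).
  The empty list is never used (junk value 0).\<close>
fun hjcf :: "real list \<Rightarrow> real" where
  "hjcf [] = 0"
| "hjcf [x] = x"
| "hjcf (x # y # ys) = x - 1 / hjcf (y # ys)"

text \<open>The word w_1 ... w_N produced from (a,b) by subtractive Euclid, stopping at (a,b) = (1,1)
  (for coprime positive a, b the first pair with equal entries is (1,1)).\<close>
function word :: "nat \<Rightarrow> nat \<Rightarrow> letter list" where
  "word a b = (if a = 0 \<or> b = 0 \<or> a = b then []
               else if a > b then L # word (a - b) b
               else R # word a (b - a))"
  by auto
termination by (relation "measure (\<lambda>(a,b). a + b)") auto

text \<open>One step of the sequence construction; the sequence a^(i) is stored as a function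
  on int (only its values on the index range m(i)..M(i) are meaningful).\<close>
definition seq_step :: "(int \<Rightarrow> int) \<Rightarrow> letter \<Rightarrow> (int \<Rightarrow> int)" where
  "seq_step f w = (case w of
      R \<Rightarrow> (\<lambda>j. if j > 1 then f j else if j = 1 then f 1 - 1 else if j = 0 then -1
                 else if j = -1 then -2 else f (j + 1))
    | L \<Rightarrow> (\<lambda>j. if j < -1 then f j else if j = -1 then f (-1) - 1 else if j = 0 then -1
                 else if j = 1 then -2 else f (j - 1)))"

definition seq0 :: "int \<Rightarrow> int" where "seq0 = (\<lambda>j. -1)"

text \<open>W_i = w_{N+1-i}, i.e. W = rev word; final sequence a^(N).\<close>
definition final_seq :: "nat \<Rightarrow> nat \<Rightarrow> (int \<Rightarrow> int)" where
  "final_seq a b = foldl seq_step seq0 (rev (word a b))"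

definition nL :: "nat \<Rightarrow> nat \<Rightarrow> nat" where
  "nL a b = length (filter (\<lambda>x. x = L) (word a b))"

definition nR :: "nat \<Rightarrow> nat \<Rightarrow> nat" where
  "nR a b = length (filter (\<lambda>x. x = R) (word a b))"

definition cval :: "nat \<Rightarrow> nat \<Rightarrow> int" where
  "cval a b = final_seq a b (int (nL a b) + 1) + final_seq a b (- (int (nR a b) + 1)) - 2"

definition chain :: "nat \<Rightarrow> nat \<Rightarrow> real list" where
  "chain a b =
     map (\<lambda>j. real_of_int \<bar>final_seq a b j\<bar>) [1 .. int (nL a b)]
     @ [real_of_int \<bar>cval a b\<bar>]
     @ map (\<lambda>j. real_of_int \<bar>final_seq a b j\<bar>) [- int (nR a b) .. -1]"

end

theory Submission
  imports Defs
begin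

text \<open>Both halves of the sequence are recorded as lists of absolute values read outwards from
  the index 0. A letter increments the innermost entry of one half and pushes a new innermost
  entry 2 onto the other, so a subtractive Euclid step \<open>(a, b) \<mapsto> (a - b, b)\<close>, resp.
  \<open>(a, b) \<mapsto> (a, b - a)\<close>, acts on the reversed chain
  \<open>|a\<^sub>-\<^sub>1|, \<dots>, |c|, \<dots>, |a\<^sub>1|\<close> by incrementing its first entry and appending 2, resp.
  prepending 2 and incrementing its last entry. The value of \<open>[x\<^sub>1, \<dots>, x\<^sub>n]\<close> is the ratio of
  the first column of \<open>\<Prod> [[x\<^sub>i, -1], [1, 0]]\<close>, and the two chain operations multiply this
  product by unipotent matrices on the left, resp. right. Induction along the Euclidean
  algorithm, starting from the chain \<open>[4]\<close> of \<open>(1, 1)\<close>, yields the matrix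
  \<open>[[(a+b)\<^sup>2, 1-(a+b)a], [(a+b)b-1, 1-ab]]\<close>; hence the reversed chain always has value
  \<open>p\<^sup>2/(pq-1)\<close>.\<close>

declare word.simps[simp del]

lemma word_eq_Nil: "a = 0 \<or> b = 0 \<or> a = b \<Longrightarrow> word a b = []"
  by (subst word.simps) simp

lemma word_L: "b < a \<Longrightarrow> 0 < b \<Longrightarrow> word a b = L # word (a - b) b"
  by (subst word.simps) simp

lemma word_R: "a < b \<Longrightarrow> 0 < a \<Longrightarrow> word a b = R # word a (b - a)"
  by (subst word.simps) simp

lemma letter_neq_iff: "w \<noteq> L \<longleftrightarrow> w = R" "w \<noteq> R \<longleftrightarrow> w = L"
  by (cases w; simp)+

definition seq_of :: "letter list \<Rightarrow> int \<Rightarrow> int" where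
  "seq_of ws = foldr (\<lambda>w f. seq_step f w) ws seq0"

lemma final_seq_eq_seq_of: "final_seq a b = seq_of (word a b)"
  by (simp add: final_seq_def seq_of_def foldr_conv_foldl)

definition incr_hd :: "int list \<Rightarrow> int list" where
  "incr_hd xs = (case xs of [] \<Rightarrow> [] | x # ys \<Rightarrow> (x + 1) # ys)"

definition incr_last :: "int list \<Rightarrow> int list" where
  "incr_last xs = butlast xs @ [last xs + 1]"

(* With a_j = seq_of ws j: side R ws ! i = -a_(i+1) and side L ws ! i = -a_(-i-1). *)
definition side :: "letter \<Rightarrow> letter list \<Rightarrow> int list" where
  "side s ws = foldr (\<lambda>w xs. if w = s then incr_hd xs else 2 # xs) ws [1]"

lemma side_Nil [simp]: "side s [] = [1]"
  by (simp add: side_def)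

lemma side_Cons_eq [simp]: "side s (s # ws) = incr_hd (side s ws)"
  by (simp add: side_def)

lemma side_Cons_neq [simp]: "w \<noteq> s \<Longrightarrow> side s (w # ws) = 2 # side s ws"
  by (simp add: side_def)

lemma length_incr_hd [simp]: "length (incr_hd xs) = length xs"
  by (simp add: incr_hd_def split: list.split)

lemma length_side: "length (side s ws) = length (filter (\<lambda>w. w \<noteq> s) ws) + 1"
  by (induction ws) (auto simp: side_def)

lemma side_nonempty [simp]: "side s ws \<noteq> []"
  using length_side[of s ws] by auto

lemma nth_incr_hd: "xs \<noteq> [] \<Longrightarrow> incr_hd xs ! i = (if i = 0 then xs ! 0 + 1 else xs ! i)"
  by (cases xs) (auto simp: incr_hd_def nth_Cons')

lemma seq_of_Nil [simp]: "seq_of [] = seq0"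
  by (simp add: seq_of_def)

lemma seq_of_Cons [simp]: "seq_of (w # ws) = seq_step (seq_of ws) w"
  by (simp add: seq_of_def)

lemma seq_of_pos_index:
  "i \<le> length (filter (\<lambda>w. w = L) ws) \<Longrightarrow> seq_of ws (int i + 1) = - side R ws ! i"
proof (induction ws arbitrary: i)
  case Nil
  then show ?case by (simp add: seq0_def)
next
  case (Cons w ws)
  show ?case
  proof (cases w)
    case L
    with Cons show ?thesis
      by (cases i) (auto simp: seq_step_def add.commute[of 1])
  next
    case R
    with Cons.IH[of 0] Cons.prems show ?thesis
      by (auto simp: seq_step_def nth_incr_hd Cons.IH)
  qed
qed

lemma seq_of_neg_index:
  "i \<le> length (filter (\<lambda>w. w = R) ws) \<Longrightarrow> seq_of ws (- int i - 1) = - side L ws ! i"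
proof (induction ws arbitrary: i)
  case Nil
  then show ?case by (simp add: seq0_def)
next
  case (Cons w ws)
  show ?case
  proof (cases w)
    case R
    show ?thesis
    proof (cases i)
      case (Suc k)
      have "seq_of (w # ws) (- int i - 1) = seq_of ws (- int i - 1 + 1)"
        using R Suc by (simp add: seq_step_def)
      also have "- int i - 1 + 1 = - int k - 1"
        using Suc by simp
      finally show ?thesis
        using Cons R Suc by simp
    qed (simp add: R seq_step_def)
  next
    case L
    with Cons.IH[of 0] Cons.prems show ?thesis
      by (auto simp: seq_step_def nth_incr_hd Cons.IH)
  qed
qed

lemma butlast_incr_hd: "butlast (incr_hd xs) = incr_hd (butlast xs)"
  by (cases xs rule: remdups_adj.cases) (auto simp: incr_hd_def)

lemma incr_hd_lower_bound: "\<forall>x\<in>set xs. c \<le> x \<Longrightarrow> \<forall>x\<in>set (incr_hd xs). c \<le> (x::int)"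
  by (cases xs) (auto simp: incr_hd_def)

lemma side_ge_one: "\<forall>x\<in>set (side s ws). 1 \<le> x"
  by (induction ws) (auto simp: side_def incr_hd_lower_bound)

lemma butlast_side_ge_two: "\<forall>x\<in>set (butlast (side s ws)). 2 \<le> x"
proof (induction ws)
  case (Cons w ws)
  then show ?case
    by (cases "w = s") (auto simp: butlast_incr_hd incr_hd_lower_bound)
qed simp

lemma map_upto_from_one:
  assumes "length xs = n + 1" and "\<And>i. i < n \<Longrightarrow> f (int i + 1) = h (xs ! i)"
  shows "map f [1 .. int n] = map h (butlast xs)"
  by (rule nth_equalityI) (use assms in \<open>auto simp: nth_butlast add.commute\<close>)

lemma map_upto_to_minus_one:
  assumes "length xs = n + 1" and "\<And>i. i < n \<Longrightarrow> f (- int i - 1) = h (xs ! i)"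
  shows "map f [- int n .. -1] = rev (map h (butlast xs))"
proof (rule nth_equalityI)
  fix k assume "k < length (map f [- int n .. -1])"
  then have k: "k < n" by simp
  have "- int (n - 1 - k) - 1 = - int n + int k" using k by simp
  then have "f (- int n + int k) = h (xs ! (n - 1 - k))"
    using assms(2)[of "n - 1 - k"] k by simp
  then show "map f [- int n .. -1] ! k = rev (map h (butlast xs)) ! k"
    using k assms(1) by (simp add: rev_nth nth_butlast)
qed (use assms in simp)

definition join_sides :: "int list \<Rightarrow> int list \<Rightarrow> int list" where
  "join_sides l r = butlast l @ [last l + last r + 2] @ rev (butlast r)"

definition rev_int_chain :: "nat \<Rightarrow> nat \<Rightarrow> int list" where
  "rev_int_chain a b = join_sides (side L (word a b)) (side R (word a b))"

lemma rev_chain_eq_rev_int_chain: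
  "rev (chain a b) = map real_of_int (rev_int_chain a b)"
proof -
  define ws l r where "ws = word a b" and "l = side L ws" and "r = side R ws"
  have f: "final_seq a b = seq_of ws"
    by (simp add: ws_def final_seq_eq_seq_of)
  have len: "length l = nR a b + 1" "length r = nL a b + 1"
    by (simp_all add: l_def r_def ws_def length_side nR_def nL_def letter_neq_iff)
  have r_ge: "1 \<le> r ! i" if "i \<le> nL a b" for i
    using side_ge_one[of R ws] nth_mem[of i r] that len by (simp add: r_def)
  have l_ge: "1 \<le> l ! j" if "j \<le> nR a b" for j
    using side_ge_one[of L ws] nth_mem[of j l] that len by (simp add: l_def)
  have pos: "final_seq a b (int i + 1) = - r ! i" if "i \<le> nL a b" for i
    using seq_of_pos_index[of i ws] that by (simp add: f r_def ws_def nL_def)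
  have neg: "final_seq a b (- int j - 1) = - l ! j" if "j \<le> nR a b" for j
    using seq_of_neg_index[of j ws] that by (simp add: f l_def ws_def nR_def)
  have "\<bar>cval a b\<bar> = last l + last r + 2"
  proof -
    have "last l = l ! nR a b" "last r = r ! nL a b"
      using len by (simp_all add: last_conv_nth l_def r_def)
    then show ?thesis
      using pos[of "nL a b"] neg[of "nR a b"] r_ge[of "nL a b"] l_ge[of "nR a b"]
      by (simp add: cval_def)
  qed
  moreover have "map (\<lambda>j. real_of_int \<bar>final_seq a b j\<bar>) [1 .. int (nL a b)]
      = map real_of_int (butlast r)"
  proof (rule map_upto_from_one[OF len(2)])
    fix i assume "i < nL a b"
    then show "real_of_int \<bar>final_seq a b (int i + 1)\<bar> = real_of_int (r ! i)"
      using pos[of i] r_ge[of i] by simp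
  qed
  moreover have "map (\<lambda>j. real_of_int \<bar>final_seq a b j\<bar>) [- int (nR a b) .. -1]
      = rev (map real_of_int (butlast l))"
  proof (rule map_upto_to_minus_one[OF len(1)])
    fix j assume "j < nR a b"
    then show "real_of_int \<bar>final_seq a b (- int j - 1)\<bar> = real_of_int (l ! j)"
      using neg[of j] l_ge[of j] by simp
  qed
  ultimately show ?thesis
    by (simp add: chain_def rev_int_chain_def join_sides_def rev_map l_def r_def ws_def)
qed

lemma join_sides_incr_hd_Cons:
  "l \<noteq> [] \<Longrightarrow> r \<noteq> [] \<Longrightarrow> join_sides (incr_hd l) (2 # r) = incr_hd (join_sides l r) @ [2]"
  by (cases l rule: remdups_adj.cases) (auto simp: join_sides_def incr_hd_def)

lemma join_sides_Cons_incr_hd: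
  "l \<noteq> [] \<Longrightarrow> r \<noteq> [] \<Longrightarrow> join_sides (2 # l) (incr_hd r) = 2 # incr_last (join_sides l r)"
  by (cases r rule: remdups_adj.cases)
    (auto simp: join_sides_def incr_hd_def incr_last_def butlast_append)

lemma rev_int_chain_diag: "rev_int_chain a a = [4]"
  by (simp add: rev_int_chain_def word_eq_Nil join_sides_def)

lemma rev_int_chain_L:
  "b < a \<Longrightarrow> 0 < b \<Longrightarrow> rev_int_chain a b = incr_hd (rev_int_chain (a - b) b) @ [2]"
  by (simp add: rev_int_chain_def word_L join_sides_incr_hd_Cons)

lemma rev_int_chain_R:
  "a < b \<Longrightarrow> 0 < a \<Longrightarrow> rev_int_chain a b = 2 # incr_last (rev_int_chain a (b - a))"
  by (simp add: rev_int_chain_def word_R join_sides_Cons_incr_hd)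

lemma rev_int_chain_nonempty: "rev_int_chain a b \<noteq> []"
  by (simp add: rev_int_chain_def join_sides_def)

lemma rev_int_chain_ge_two: "\<forall>x\<in>set (rev_int_chain a b). 2 \<le> x"
proof -
  have last_ge: "1 \<le> last (side s (word a b))" for s
    using side_ge_one last_in_set[OF side_nonempty] by blast
  show ?thesis
    using last_ge[of L] last_ge[of R]
      butlast_side_ge_two[of L "word a b"] butlast_side_ge_two[of R "word a b"]
    by (auto simp: rev_int_chain_def join_sides_def)
qed

(* (a, b, c, d) encodes the matrix [[a, b], [c, d]]. *)
type_synonym mat2 = "int \<times> int \<times> int \<times> int"

fun mat2_mult :: "mat2 \<Rightarrow> mat2 \<Rightarrow> mat2" where
  "mat2_mult (a, b, c, d) (e, f, g, h) = (a*e + b*g, a*f + b*h, c*e + d*g, c*f + d*h)"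

lemma mat2_mult_assoc: "mat2_mult (mat2_mult x y) z = mat2_mult x (mat2_mult y z)"
  by (cases x; cases y; cases z) (simp add: algebra_simps)

lemma mat2_mult_one_left [simp]: "mat2_mult (1, 0, 0, 1) x = x"
  by (cases x) simp

fun cf_matrix :: "int list \<Rightarrow> mat2" where
  "cf_matrix [] = (1, 0, 0, 1)"
| "cf_matrix (x # xs) = mat2_mult (x, -1, 1, 0) (cf_matrix xs)"

lemma cf_matrix_append: "cf_matrix (xs @ ys) = mat2_mult (cf_matrix xs) (cf_matrix ys)"
  by (induction xs) (simp_all add: mat2_mult_assoc)

lemma cf_matrix_incr_hd:
  "xs \<noteq> [] \<Longrightarrow> cf_matrix (incr_hd xs) = mat2_mult (1, 1, 0, 1) (cf_matrix xs)"
  by (cases xs) (simp_all add: incr_hd_def mat2_mult_assoc[symmetric])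

lemma cf_matrix_incr_last:
  assumes "xs \<noteq> []"
  shows "cf_matrix (incr_last xs) = mat2_mult (cf_matrix xs) (1, 0, -1, 1)"
proof -
  have "cf_matrix xs = mat2_mult (cf_matrix (butlast xs)) (cf_matrix [last xs])"
    using assms by (metis append_butlast_last_id cf_matrix_append)
  then show ?thesis
    by (simp add: incr_last_def cf_matrix_append mat2_mult_assoc)
qed

lemma cf_matrix_rev_int_chain:
  "coprime a b \<Longrightarrow> 0 < a \<Longrightarrow> 0 < b \<Longrightarrow>
   cf_matrix (rev_int_chain a b) =
     ((int a + int b)^2, 1 - (int a + int b) * int a, (int a + int b) * int b - 1, 1 - int a * int b)"
proof (induction a b rule: word.induct)
  case (1 a b)
  consider "a = b" | "b < a" | "a < b" by linarith
  then show ?case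
  proof cases
    case 1
    with "1.prems" have "a = 1" "b = 1" by auto
    then show ?thesis by (simp add: rev_int_chain_diag)
  next
    case 2
    then have "coprime (a - b) b"
      using "1.prems"(1) by (simp add: coprime_iff_gcd_eq_1 gcd_diff1_nat)
    with 2 "1.IH"(1) "1.prems" show ?thesis
      by (simp add: rev_int_chain_L cf_matrix_append cf_matrix_incr_hd rev_int_chain_nonempty
          power2_eq_square algebra_simps)
  next
    case 3
    then have "coprime a (b - a)"
      using "1.prems"(1) by (simp add: coprime_iff_gcd_eq_1 gcd.commute[of a] gcd_diff1_nat)
    with 3 "1.IH"(2) "1.prems" show ?thesis
      by (simp add: rev_int_chain_R cf_matrix_incr_last rev_int_chain_nonempty
          power2_eq_square algebra_simps)
  qed
qed

lemma hjcf_Cons: "xs \<noteq> [] \<Longrightarrow> hjcf (x # xs) = x - 1 / hjcf xs"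
  by (cases xs) simp_all

lemma hjcf_eq_cf_matrix_ratio:
  assumes "xs \<noteq> []" and "\<forall>x\<in>set xs. 2 \<le> x" and "cf_matrix xs = (m11, m12, m21, m22)"
  shows "0 < m21 \<and> m21 < m11 \<and> hjcf (map real_of_int xs) = m11 / m21"
  using assms
proof (induction xs arbitrary: m11 m12 m21 m22)
  case (Cons x xs)
  show ?case
  proof (cases "xs = []")
    case False
    obtain n11 n12 n21 n22 where n: "cf_matrix xs = (n11, n12, n21, n22)"
      by (cases "cf_matrix xs") auto
    have IH: "0 < n21" "n21 < n11" "hjcf (map real_of_int xs) = n11 / n21"
      using Cons.IH[OF False _ n] Cons.prems by auto
    have m: "m11 = x * n11 - n21" "m21 = n11"
      using Cons.prems(3) n by auto
    have "2 * n11 \<le> x * n11"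
      using Cons.prems(2) IH by simp
    then have "m21 < m11"
      using IH m by linarith
    moreover have "hjcf (map real_of_int (x # xs)) = x - 1 / (n11 / n21)"
      using False IH(3) by (simp add: hjcf_Cons)
    moreover have "x - 1 / (n11 / n21) = real_of_int m11 / real_of_int m21"
      using IH(1,2) by (simp add: m field_simps)
    ultimately show ?thesis
      using IH m by simp
  qed (use Cons.prems in auto)
qed simp

theorem lemma3p1:
  fixes p q :: nat
  assumes "coprime p q" and "1 \<le> q" and "q < p"
  shows "hjcf (chain (p - q) q) = real (p^2) / real (p * q - 1)
       \<or> hjcf (rev (chain (p - q) q)) = real (p^2) / real (p * q - 1)"
proof -
  have "coprime (p - q) q"
    using assms by (simp add: coprime_iff_gcd_eq_1 gcd_diff1_nat)
  then have "cf_matrix (rev_int_chain (p - q) q)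
      = (int p ^ 2, 1 - int p * int (p - q), int p * int q - 1, 1 - int (p - q) * int q)"
    using assms cf_matrix_rev_int_chain[of "p - q" q] by simp
  then have "hjcf (rev (chain (p - q) q)) = real_of_int (int p ^ 2) / real_of_int (int p * int q - 1)"
    using hjcf_eq_cf_matrix_ratio[OF rev_int_chain_nonempty rev_int_chain_ge_two]
    by (simp add: rev_chain_eq_rev_int_chain)
  also have "\<dots> = real (p^2) / real (p * q - 1)"
    using assms by simp
  finally show ?thesis ..
qed

end
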